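(* Every ideal of a nilpotent-free Lie algebra is nilpotent-free (as a Lie algebra in its own right).
   Context: All algebras are finite-dimensional over an infinite field $K$. An element $x$ of a Lie algebra $L$ is nilpotent if $\operatorname{ad}x$ (acting on $L$) is a nilpotent linear map. $L$ is called nilpotent-free if every nilpotent element of $L$ lies in the center of $L$. *)

theory Defs
  imports Complex_Main
begin

definition lie_algebra ::
  "('k::field \<Rightarrow> 'v::ab_group_add \<Rightarrow> 'v) \<Rightarrow> ('v \<Rightarrow> 'v \<Rightarrow> 'v) \<Rightarrow> 'v set \<Rightarrow> bool" where
  "lie_algebra scale br L \<longleftrightarrow>
     vector_space scale \<and> module.subspace scale L \<and>
     (\<exists>B. finite B \<and> B \<subseteq> L \<and> module.span scale B = L) \<and>
     (\<forall>x\<in>L. \<forall>y\<in>L. br x y \<in> L) \<and>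
     (\<forall>x\<in>L. \<forall>y\<in>L. \<forall>z\<in>L. br (x + y) z = br x z + br y z \<and> br x (y + z) = br x y + br x z) \<and>
     (\<forall>c. \<forall>x\<in>L. \<forall>y\<in>L. br (scale c x) y = scale c (br x y) \<and> br x (scale c y) = scale c (br x y)) \<and>
     (\<forall>x\<in>L. br x x = 0) \<and>
     (\<forall>x\<in>L. \<forall>y\<in>L. \<forall>z\<in>L. br x (br y z) + br y (br z x) + br z (br x y) = 0)"

definition lie_ideal ::
  "('k::field \<Rightarrow> 'v::ab_group_add \<Rightarrow> 'v) \<Rightarrow> ('v \<Rightarrow> 'v \<Rightarrow> 'v) \<Rightarrow> 'v set \<Rightarrow> 'v set \<Rightarrow> bool" where
  "lie_ideal scale br L I \<longleftrightarrow>
     module.subspace scale I \<and> I \<subseteq> L \<and> (\<forall>x\<in>L. \<forall>y\<in>I. br x y \<in> I)"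

definition ad_nilpotent :: "('v::ab_group_add \<Rightarrow> 'v \<Rightarrow> 'v) \<Rightarrow> 'v set \<Rightarrow> 'v \<Rightarrow> bool" where
  "ad_nilpotent br L x \<longleftrightarrow> (\<exists>n. \<forall>y\<in>L. (br x ^^ n) y = 0)"

definition lie_center :: "('v::ab_group_add \<Rightarrow> 'v \<Rightarrow> 'v) \<Rightarrow> 'v set \<Rightarrow> 'v set" where
  "lie_center br L = {x\<in>L. \<forall>y\<in>L. br x y = 0}"

definition nilpotent_free :: "('v::ab_group_add \<Rightarrow> 'v \<Rightarrow> 'v) \<Rightarrow> 'v set \<Rightarrow> bool" where
  "nilpotent_free br L \<longleftrightarrow> (\<forall>x\<in>L. ad_nilpotent br L x \<longrightarrow> x \<in> lie_center br L)"

end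

theory Submission
  imports Defs
begin

text \<open>If ad x is nilpotent on an ideal I with
  x \<in> I, then ad x maps L into I (by antisymmetry), so one more application of ad x
  kills all of L; hence x is central in L and a fortiori in I.\<close>

lemma (in vector_space) finitely_spanned_subspace:
  assumes "finite B0" "span B0 = L" "subspace I" "I \<subseteq> L"
  shows "\<exists>B. finite B \<and> B \<subseteq> I \<and> span B = I"
proof -
  obtain B where B: "B \<subseteq> I" "independent B" "I \<subseteq> span B"
    using maximal_independent_subset by blast
  have "finite B"
    using independent_span_bound[OF assms(1) B(2)] B(1) assms(2,4) by blast
  moreover have "span B = I"
    using span_subspace[OF B(1,3) assms(3)] .
  ultimately show ?thesis
    using B(1) by blast
qed

lemma lie_algebra_subalgebra:
  assumes "lie_algebra scale br L" "module.subspace scale J" "J \<subseteq> L"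
    and "\<forall>x\<in>J. \<forall>y\<in>J. br x y \<in> J"
  shows "lie_algebra scale br J"
proof -
  interpret vector_space scale
    using assms(1) by (simp add: lie_algebra_def)
  have "\<exists>B. finite B \<and> B \<subseteq> J \<and> span B = J"
    using assms(1,2,3) finitely_spanned_subspace by (auto simp: lie_algebra_def)
  then show ?thesis
    using assms unfolding lie_algebra_def by (simp add: subset_iff)
qed

lemma lie_bracket_antisym:
  assumes "lie_algebra scale br L" "x \<in> L" "y \<in> L"
  shows "br x y = - br y x"
proof -
  interpret vector_space scale
    using assms(1) by (simp add: lie_algebra_def)
  have xy: "x + y \<in> L"
    using assms by (simp add: lie_algebra_def subspace_add)
  have add: "br (u + v) w = br u w + br v w" "br w (u + v) = br w u + br w v"
    if "u \<in> L" "v \<in> L" "w \<in> L" for u v w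
    using assms(1) that by (simp_all add: lie_algebra_def)
  have alt: "br u u = 0" if "u \<in> L" for u
    using assms(1) that by (simp add: lie_algebra_def)
  have "0 = br (x + y) (x + y)"
    using alt[OF xy] ..
  also have "\<dots> = br x x + br x y + (br y x + br y y)"
    using add[OF assms(2,3) xy] add[OF assms(2,3) assms(2)] add[OF assms(2,3) assms(3)] by simp
  also have "\<dots> = br x y + br y x"
    using alt assms(2,3) by simp
  finally show ?thesis
    by (simp add: eq_neg_iff_add_eq_0)
qed

lemma lie_ideal_bracket_right:
  assumes "lie_algebra scale br L" "lie_ideal scale br L I" "x \<in> I" "y \<in> L"
  shows "br x y \<in> I"
proof -
  interpret vector_space scale
    using assms(1) by (simp add: lie_algebra_def)
  have "x \<in> L" "br y x \<in> I"
    using assms(2-4) by (auto simp: lie_ideal_def)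
  then have "- br y x \<in> I"
    using assms(2) by (simp add: lie_ideal_def subspace_neg)
  then show ?thesis
    using lie_bracket_antisym[OF assms(1) \<open>x \<in> L\<close> assms(4)] by simp
qed

lemma ad_nilpotent_on_ideal_imp_ad_nilpotent:
  assumes "lie_algebra scale br L" "lie_ideal scale br L I" "x \<in> I"
    and "ad_nilpotent br I x"
  shows "ad_nilpotent br L x"
proof -
  obtain n where n: "\<forall>y\<in>I. (br x ^^ n) y = 0"
    using assms(4) by (auto simp: ad_nilpotent_def)
  have "(br x ^^ Suc n) y = 0" if "y \<in> L" for y
    using n lie_ideal_bracket_right[OF assms(1-3) that] by (simp only: funpow_Suc_right comp_apply)
  then show ?thesis
    unfolding ad_nilpotent_def by blast
qed

lemma lie_center_restrict:
  assumes "x \<in> lie_center br L" "x \<in> I" "I \<subseteq> L"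
  shows "x \<in> lie_center br I"
  using assms by (auto simp: lie_center_def)

theorem lemma8:
  fixes scale :: "'k::field \<Rightarrow> 'v::ab_group_add \<Rightarrow> 'v"
    and br :: "'v \<Rightarrow> 'v \<Rightarrow> 'v"
    and L I :: "'v set"
  assumes "infinite (UNIV :: 'k set)"
    and "lie_algebra scale br L"
    and "nilpotent_free br L"
    and "lie_ideal scale br L I"
  shows "lie_algebra scale br I \<and> nilpotent_free br I"
proof
  have IL: "I \<subseteq> L"
    using assms(4) by (simp add: lie_ideal_def)
  show "lie_algebra scale br I"
    using lie_algebra_subalgebra[OF assms(2)] assms(4) IL by (auto simp: lie_ideal_def)
  show "nilpotent_free br I"
    unfolding nilpotent_free_def
  proof (intro ballI impI)
    fix x assume "x \<in> I" "ad_nilpotent br I x"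
    then have "ad_nilpotent br L x"
      by (rule ad_nilpotent_on_ideal_imp_ad_nilpotent[OF assms(2,4)])
    then have "x \<in> lie_center br L"
      using assms(3) \<open>x \<in> I\<close> IL unfolding nilpotent_free_def by blast
    then show "x \<in> lie_center br I"
      using \<open>x \<in> I\<close> IL by (rule lie_center_restrict)
  qed
qed

end
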